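(* Let $d\ge1$, let $\nu:\mathbb J\to\mathbb N_+$ be monotonically increasing and $p:\mathbb J\to(0,1)$ strictly decreasing with $\sum_{j\in\mathbb J}p_j=1$. Let $(j^{(t)})_{t\ge1}$ be an efficiency-nonincreasing enumeration of $\mathbb J$ and $I_{(t)}:=\{j^{(1)},\dots,j^{(t)}\}$. Then for every $t\ge1$, $I_{(t)}$ is a solution of Problem 3 with $P=p(I_{(t)})$.
   Context: $\mathbb J:=\mathbb N^d$ with $\mathbb N=\{0,1,2,\dots\}$, partially ordered componentwise ($i\le j$ iff $i_h\le j_h$ for all $h$; $i<j$ iff $i\le j$, $i\neq j$). For $I\subseteq\mathbb J$, $\operatorname{\downarrow} I:=\{j: j\le i\text{ for some } i\in I\}$. $\nu(I):=\sum_{j\in I}\nu_j$, $p(I):=\sum_{j\in I}p_j$, efficiency $r_j:=p_j/\nu_j$. Strictly decreasing: $i<j\Rightarrow f_i>f_j$; monotonically increasing: $i<j\Rightarrow f_i\le f_j$. An efficiency-nonincreasing enumeration of $\mathbb J$ is a bijection $t\mapsto j^{(t)}$ from $\mathbb N_+$ onto $\mathbb J$ with $r_{j^{(t)}}\ge r_{j^{(t+1)}}$ for all $t$. Problem 3 (for given $P\in(0,1)$): minimize $\nu(I)$ over $I\subseteq\mathbb J$ subject to $I=\operatorname{\downarrow} I$ and $p(I)\ge P$. *)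

theory Defs
  imports "HOL-Analysis.Analysis"
begin

text \<open>The index set J = N^d is rendered as the function type 'd \<Rightarrow> nat for a finite
  (hence nonempty, so d \<ge> 1) index type 'd. The componentwise order is the pointwise
  order on functions (le_fun); strict order i < j means i \<le> j and i \<noteq> j.\<close>

definition down_closure :: "('d \<Rightarrow> nat) set \<Rightarrow> ('d \<Rightarrow> nat) set" where
  "down_closure I = {j. \<exists>i\<in>I. j \<le> i}"

text \<open>nu(I) as an extended nonnegative sum (infinite for infinite I since nu \<ge> 1).\<close>
definition nu_set :: "(('d \<Rightarrow> nat) \<Rightarrow> nat) \<Rightarrow> ('d \<Rightarrow> nat) set \<Rightarrow> ennreal" where
  "nu_set \<nu> I = infsum (\<lambda>j. ennreal (real (\<nu> j))) I"

definition p_set :: "(('d \<Rightarrow> nat) \<Rightarrow> real) \<Rightarrow> ('d \<Rightarrow> nat) set \<Rightarrow> real" where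
  "p_set p I = infsum p I"

definition efficiency :: "(('d \<Rightarrow> nat) \<Rightarrow> nat) \<Rightarrow> (('d \<Rightarrow> nat) \<Rightarrow> real) \<Rightarrow> ('d \<Rightarrow> nat) \<Rightarrow> real" where
  "efficiency \<nu> p j = p j / real (\<nu> j)"

definition eff_nonincr_enum ::
  "(('d \<Rightarrow> nat) \<Rightarrow> nat) \<Rightarrow> (('d \<Rightarrow> nat) \<Rightarrow> real) \<Rightarrow> (nat \<Rightarrow> ('d \<Rightarrow> nat)) \<Rightarrow> bool" where
  "eff_nonincr_enum \<nu> p e \<longleftrightarrow> bij_betw e {1..} UNIV \<and>
     (\<forall>t\<ge>1. efficiency \<nu> p (e t) \<ge> efficiency \<nu> p (e (Suc t)))"

definition solves_problem3 ::
  "(('d \<Rightarrow> nat) \<Rightarrow> nat) \<Rightarrow> (('d \<Rightarrow> nat) \<Rightarrow> real) \<Rightarrow> real \<Rightarrow> ('d \<Rightarrow> nat) set \<Rightarrow> bool" where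
  "solves_problem3 \<nu> p P I \<longleftrightarrow>
     I = down_closure I \<and> p_set p I \<ge> P \<and>
     (\<forall>I'. I' = down_closure I' \<and> p_set p I' \<ge> P \<longrightarrow> nu_set \<nu> I \<le> nu_set \<nu> I')"

end

theory Submission
  imports Defs
begin

text \<open>
  Let r = p/nu be the efficiency and T = e`{1..t} the first t items of an
  efficiency-nonincreasing enumeration, with threshold c = r (e t) > 0. Every item of T
  has efficiency at least c and every item outside T at most c.
  (1) Since p is strictly decreasing and nu monotone and positive, r is strictly
      decreasing; an item below an element of T therefore has efficiency above c and
      cannot lie outside T, so T is down-closed.
  (2) Fractional-knapsack exchange: on T we have p \<ge> c nu and outside p \<le> c nu, so any
      finite I' with p(I') \<ge> p(T) satisfies c nu(T - I') \<le> p(T - I') \<le> p(I' - T) \<le>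
      c nu(I' - T), hence nu(T) \<le> nu(I'); infinite I' have nu(I') = \<infinity> as nu \<ge> 1.
  The file first proves the threshold property of enumeration prefixes, then (1) and (2)
  as general lemmas, and finally assembles the corollary.
\<close>

lemma antitone_from_steps:
  fixes f :: "nat \<Rightarrow> real"
  assumes steps: "\<And>s. 1 \<le> s \<Longrightarrow> f (Suc s) \<le> f s" and "1 \<le> a" and "a \<le> b"
  shows "f b \<le> f a"
  using \<open>a \<le> b\<close>
proof (induction b rule: dec_induct)
  case base
  then show ?case by simp
next
  case (step n)
  then show ?case using steps[of n] \<open>1 \<le> a\<close> by linarith
qed

lemma prefix_threshold:
  fixes f :: "'a \<Rightarrow> real" and e :: "nat \<Rightarrow> 'a"
  assumes bij: "bij_betw e {1..} UNIV"
    and steps: "\<And>s. 1 \<le> s \<Longrightarrow> f (e (Suc s)) \<le> f (e s)"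
    and t: "1 \<le> t"
  shows "\<And>j. j \<in> e ` {1..t} \<Longrightarrow> f (e t) \<le> f j"
    and "\<And>j. j \<notin> e ` {1..t} \<Longrightarrow> f j \<le> f (e t)"
proof -
  have mono: "f (e b) \<le> f (e a)" if "1 \<le> a" "a \<le> b" for a b
    using antitone_from_steps[of "f \<circ> e"] steps that by simp
  fix j
  show "f (e t) \<le> f j" if "j \<in> e ` {1..t}"
    using that mono by auto
  show "f j \<le> f (e t)" if j: "j \<notin> e ` {1..t}"
  proof -
    have "j \<in> e ` {1..}" using bij by (simp add: bij_betw_def)
    then obtain s where s: "1 \<le> s" "j = e s" by auto
    with j have "t \<le> s" by (metis atLeastAtMost_iff image_eqI nat_le_linear order_antisym)
    then show ?thesis using mono[OF t] s by simp
  qed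
qed

lemma efficiency_strictly_decreasing:
  fixes \<nu> :: "('d \<Rightarrow> nat) \<Rightarrow> nat" and p :: "('d \<Rightarrow> nat) \<Rightarrow> real"
  assumes nu_pos: "\<And>j. \<nu> j > 0"
    and nu_mono: "\<And>i j. i < j \<Longrightarrow> \<nu> i \<le> \<nu> j"
    and p_pos: "\<And>j. 0 < p j"
    and p_decr: "\<And>i j. i < j \<Longrightarrow> p i > p j"
    and "i < j"
  shows "efficiency \<nu> p j < efficiency \<nu> p i"
proof -
  have "p j / real (\<nu> j) < p i / real (\<nu> j)"
    using p_decr[OF \<open>i < j\<close>] nu_pos[of j] by (simp add: divide_strict_right_mono)
  also have "\<dots> \<le> p i / real (\<nu> i)"
    using nu_mono[OF \<open>i < j\<close>] nu_pos[of i] p_pos[of i] by (simp add: frac_le)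
  finally show ?thesis unfolding efficiency_def .
qed

lemma threshold_set_down_closed:
  fixes r :: "('d \<Rightarrow> nat) \<Rightarrow> real"
  assumes r_decr: "\<And>i j. i < j \<Longrightarrow> r j < r i"
    and inside: "\<And>j. j \<in> T \<Longrightarrow> c \<le> r j"
    and outside: "\<And>j. j \<notin> T \<Longrightarrow> r j \<le> c"
  shows "T = down_closure T"
proof
  show "T \<subseteq> down_closure T" unfolding down_closure_def by auto
  show "down_closure T \<subseteq> T"
  proof
    fix j assume "j \<in> down_closure T"
    then obtain i where i: "i \<in> T" "j \<le> i" unfolding down_closure_def by auto
    show "j \<in> T"
    proof (rule ccontr)
      assume "j \<notin> T"
      then have "j < i" using i by (metis order_le_less)
      then show False using r_decr outside[OF \<open>j \<notin> T\<close>] inside[OF \<open>i \<in> T\<close>] by fastforce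
    qed
  qed
qed

lemma threshold_set_min_cost:
  fixes p w :: "'a \<Rightarrow> real"
  assumes c: "c > 0" and finT: "finite T" and finI: "finite I"
    and inside: "\<And>j. j \<in> T \<Longrightarrow> c * w j \<le> p j"
    and outside: "\<And>j. j \<notin> T \<Longrightarrow> p j \<le> c * w j"
    and prob: "sum p T \<le> sum p I"
  shows "sum w T \<le> sum w I"
proof -
  have split: "sum f A = sum f (A - B) + sum f (A \<inter> B)" if "finite A" for f :: "'a \<Rightarrow> real" and A B
    using sum.subset_diff[of "A \<inter> B" A f] that by (simp add: Diff_Int)
  have "c * sum w (T - I) \<le> sum p (T - I)"
    unfolding sum_distrib_left by (rule sum_mono) (use inside in auto)
  also have "\<dots> \<le> sum p (I - T)"
    using prob split[OF finT, of p I] split[OF finI, of p T] by (simp add: Int_commute)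
  also have "\<dots> \<le> c * sum w (I - T)"
    unfolding sum_distrib_left by (rule sum_mono) (use outside in auto)
  finally have "sum w (T - I) \<le> sum w (I - T)" using c by simp
  then show ?thesis
    using split[OF finT, of w I] split[OF finI, of w T] by (simp add: Int_commute)
qed

lemma nu_set_infinite:
  assumes "\<And>j. \<nu> j > 0" and "infinite I"
  shows "nu_set \<nu> I = \<infinity>"
  unfolding nu_set_def
  by (rule infsum_superconst_infinite_ennreal[where b=1]) (use assms in \<open>auto simp: Suc_le_eq\<close>)

lemma nu_set_finite: "finite I \<Longrightarrow> nu_set \<nu> I = ennreal (\<Sum>j\<in>I. real (\<nu> j))"
  unfolding nu_set_def by (simp add: sum_ennreal)

lemma p_set_finite: "finite I \<Longrightarrow> p_set p I = sum p I"
  unfolding p_set_def by simp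

theorem corollary1:
  fixes \<nu> :: "('d::finite \<Rightarrow> nat) \<Rightarrow> nat"
    and p :: "('d \<Rightarrow> nat) \<Rightarrow> real"
    and e :: "nat \<Rightarrow> ('d \<Rightarrow> nat)"
    and t :: nat
  assumes nu_pos: "\<And>j. \<nu> j > 0"
    and nu_mono: "\<And>i j. i < j \<Longrightarrow> \<nu> i \<le> \<nu> j"
    and p_range: "\<And>j. 0 < p j \<and> p j < 1"
    and p_decr: "\<And>i j. i < j \<Longrightarrow> p i > p j"
    and p_sum: "(p has_sum 1) UNIV"
    and enum: "eff_nonincr_enum \<nu> p e"
    and t: "t \<ge> 1"
  shows "solves_problem3 \<nu> p (p_set p (e ` {1..t})) (e ` {1..t})"
proof -
  define T where "T = e ` {1..t}"
  define r where "r = efficiency \<nu> p"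
  define c where "c = r (e t)"
  have c_pos: "c > 0" using nu_pos p_range by (simp add: c_def r_def efficiency_def)
  have bij: "bij_betw e {1..} UNIV" and steps: "\<And>s. 1 \<le> s \<Longrightarrow> r (e (Suc s)) \<le> r (e s)"
    using enum by (auto simp: r_def eff_nonincr_enum_def)
  have inside: "\<And>j. j \<in> T \<Longrightarrow> c \<le> r j" and outside: "\<And>j. j \<notin> T \<Longrightarrow> r j \<le> c"
    using prefix_threshold[of e r t, OF bij steps t] by (auto simp: T_def c_def)
  have r_decr: "r j < r i" if "i < j" for i j
    using efficiency_strictly_decreasing[OF nu_pos nu_mono _ p_decr that] p_range
    by (simp add: r_def)
  have down: "T = down_closure T"
    using threshold_set_down_closed[of r T c] r_decr inside outside by blast
  have optimal: "nu_set \<nu> T \<le> nu_set \<nu> I" if "p_set p T \<le> p_set p I" for I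
  proof (cases "finite I")
    case True
    have "(\<Sum>j\<in>T. real (\<nu> j)) \<le> (\<Sum>j\<in>I. real (\<nu> j))"
    proof (rule threshold_set_min_cost[OF c_pos _ True])
      show "c * real (\<nu> j) \<le> p j" if "j \<in> T" for j
        using inside[OF that] nu_pos[of j] by (simp add: r_def efficiency_def pos_le_divide_eq)
      show "p j \<le> c * real (\<nu> j)" if "j \<notin> T" for j
        using outside[OF that] nu_pos[of j] by (simp add: r_def efficiency_def pos_divide_le_eq)
    qed (use that True in \<open>simp_all add: T_def p_set_finite\<close>)
    then show ?thesis using True by (simp add: T_def nu_set_finite ennreal_leI)
  qed (simp add: nu_set_infinite[OF nu_pos])
  show ?thesis unfolding solves_problem3_def T_def[symmetric] using down optimal by blast
qed

end
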